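(* Let $\Gamma=(V,E)$ be a finite, simple, acyclic, modular directed graph, and let $H\subseteq E$ be a set of edges that is ample and connected. Then $H$ is sufficient, i.e. the completion $\hat H$ of $H$ contains a directed path from a source of $\Gamma$ to a sink of $\Gamma$.
   Context: A directed graph $\Gamma=(V,E)$ assigns to each edge $e$ a tail $t(e)$ and a head $h(e)$; it is simple if edges with the same tail and head coincide, and acyclic if it has no directed path of positive length from a vertex to itself. A directed (positive) path is a sequence of edges $e_1,\dots,e_k$ with $t(e_{i+1})=h(e_i)$; a vertex is regarded as joined to itself by the path of length $0$. A source is a vertex that is the head of no edge; a sink is a vertex that is the tail of no edge. $\Gamma$ is modular if (1) for any two distinct edges $e_1,e_2$ with a common tail there exist edges $f_1,f_2$ with a common head and $h(e_i)=t(f_i)$, $i=1,2$; and (2) for any two distinct edges $h_1,h_2$ with a common head there exist edges $g_1,g_2$ with a common tail and $h(g_i)=t(h_i)$, $i=1,2$. D-operation: from a pair of distinct edges $e_1,e_2$ with a common tail, any pair of edges $f_1,f_2$ with a common head and $h(e_i)=t(f_i)$ is obtained. U-operation: from a pair of distinct edges $f_1',f_2'$ with a common head, any pair $e_1',e_2'$ with a common tail and $h(e_i')=t(f_i')$ is obtained. A set $E_0\subseteq E$ is complete if every result of any D- or U-operation applied to edges of $E_0$ lies in $E_0$; the completion $\hat F$ of $F\subseteq E$ is the smallest complete set containing $F$. A set of edges is sufficient if its completion contains a directed path all of whose edges lie in it, from a source to a sink of $\Gamma$. For $G\subseteq E$ let $V(G)$ be the set of heads and tails of edges in $G$. A set $W\subseteq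 V$ is ample if (1) for every non-sink vertex $v$ there is $u\in W$ such that there is no directed path in $\Gamma$ from $u$ to $v$, and (2) for every non-source vertex $v$ there is $w\in W$ such that there is no directed path in $\Gamma$ from $v$ to $w$; a set of edges $G$ is ample if $V(G)$ is ample. A set of edges $G$ is connected if the undirected graph with vertex set $V(G)$ and edge set $G$ (directions forgotten) is connected. *)

theory Defs
  imports Main
begin

text \<open>A simple directed graph is given by a vertex set V and an edge relation
E \<subseteq> V \<times> V; an edge e = (u,v) has tail fst e = u and head snd e = v.
Simplicity (edges with equal tail and head coincide) is built into this
representation.\<close>

definition dgraph :: "'a set \<Rightarrow> ('a \<times> 'a) set \<Rightarrow> bool" where
  "dgraph V E \<longleftrightarrow> E \<subseteq> V \<times> V"

definition is_source :: "'a set \<Rightarrow> ('a \<times> 'a) set \<Rightarrow> 'a \<Rightarrow> bool" where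
  "is_source V E v \<longleftrightarrow> v \<in> V \<and> (\<forall>e\<in>E. snd e \<noteq> v)"

definition is_sink :: "'a set \<Rightarrow> ('a \<times> 'a) set \<Rightarrow> 'a \<Rightarrow> bool" where
  "is_sink V E v \<longleftrightarrow> v \<in> V \<and> (\<forall>e\<in>E. fst e \<noteq> v)"

definition modular :: "('a \<times> 'a) set \<Rightarrow> bool" where
  "modular E \<longleftrightarrow>
     (\<forall>e1\<in>E. \<forall>e2\<in>E. e1 \<noteq> e2 \<and> fst e1 = fst e2 \<longrightarrow>
        (\<exists>f1\<in>E. \<exists>f2\<in>E. snd f1 = snd f2 \<and> snd e1 = fst f1 \<and> snd e2 = fst f2)) \<and>
     (\<forall>h1\<in>E. \<forall>h2\<in>E. h1 \<noteq> h2 \<and> snd h1 = snd h2 \<longrightarrow>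
        (\<exists>g1\<in>E. \<exists>g2\<in>E. fst g1 = fst g2 \<and> snd g1 = fst h1 \<and> snd g2 = fst h2))"

text \<open>Completeness: closed under all D- and U-operations (results taken in E).\<close>
definition complete_set :: "('a \<times> 'a) set \<Rightarrow> ('a \<times> 'a) set \<Rightarrow> bool" where
  "complete_set E E0 \<longleftrightarrow> E0 \<subseteq> E \<and>
     (\<forall>e1\<in>E0. \<forall>e2\<in>E0. \<forall>f1\<in>E. \<forall>f2\<in>E.
        e1 \<noteq> e2 \<and> fst e1 = fst e2 \<and> snd f1 = snd f2 \<and> snd e1 = fst f1 \<and> snd e2 = fst f2
        \<longrightarrow> f1 \<in> E0 \<and> f2 \<in> E0) \<and>
     (\<forall>f1\<in>E0. \<forall>f2\<in>E0. \<forall>e1\<in>E. \<forall>e2\<in>E.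
        f1 \<noteq> f2 \<and> snd f1 = snd f2 \<and> fst e1 = fst e2 \<and> snd e1 = fst f1 \<and> snd e2 = fst f2
        \<longrightarrow> e1 \<in> E0 \<and> e2 \<in> E0)"

text \<open>Completion: the smallest complete set containing F (intersection of all
complete supersets; complete sets are closed under intersection).\<close>
definition completion :: "('a \<times> 'a) set \<Rightarrow> ('a \<times> 'a) set \<Rightarrow> ('a \<times> 'a) set" where
  "completion E F = \<Inter> {E0. complete_set E E0 \<and> F \<subseteq> E0}"

text \<open>Sufficient: the completion contains a directed path (possibly of length 0)
from a source to a sink; a path with all edges in a set S from s to t exists
iff (s,t) is in the reflexive-transitive closure of S.\<close>
definition sufficient :: "'a set \<Rightarrow> ('a \<times> 'a) set \<Rightarrow> ('a \<times> 'a) set \<Rightarrow> bool" where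
  "sufficient V E F \<longleftrightarrow>
     (\<exists>s t. is_source V E s \<and> is_sink V E t \<and> (s, t) \<in> (completion E F)\<^sup>*)"

definition verts_of :: "('a \<times> 'a) set \<Rightarrow> 'a set" where
  "verts_of G = fst ` G \<union> snd ` G"

definition ample_vset :: "'a set \<Rightarrow> ('a \<times> 'a) set \<Rightarrow> 'a set \<Rightarrow> bool" where
  "ample_vset V E W \<longleftrightarrow>
     (\<forall>v\<in>V. \<not> is_sink V E v \<longrightarrow> (\<exists>u\<in>W. (u, v) \<notin> E\<^sup>*)) \<and>
     (\<forall>v\<in>V. \<not> is_source V E v \<longrightarrow> (\<exists>w\<in>W. (v, w) \<notin> E\<^sup>*))"

definition ample_edges :: "'a set \<Rightarrow> ('a \<times> 'a) set \<Rightarrow> ('a \<times> 'a) set \<Rightarrow> bool" where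
  "ample_edges V E G \<longleftrightarrow> ample_vset V E (verts_of G)"

definition connected_edges :: "('a \<times> 'a) set \<Rightarrow> bool" where
  "connected_edges G \<longleftrightarrow> G \<noteq> {} \<and>
     (\<forall>u\<in>verts_of G. \<forall>v\<in>verts_of G. (u, v) \<in> (G \<union> G\<inverse>)\<^sup>*)"

end

theory Submission
  imports Defs
begin

text \<open>Let \<open>C\<close> be the completion of \<open>H\<close>. By modularity, the D-operation gives \<open>C\<close> the
diamond property and the U-operation gives it to the converse of \<open>C\<close>. Under the diamond
property, if \<open>x\<close> reaches a vertex \<open>t\<close> without successors in \<open>k + 1\<close> steps, then every
successor of \<open>x\<close> reaches \<open>t\<close> in \<open>k\<close> steps; hence \<open>t\<close> is reached from every vertex of its
undirected component. So a vertex of the undirected \<open>C\<close>-component of \<open>V(H)\<close> without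
\<open>C\<close>-successor is reached in \<open>\<Gamma>\<close> from all of \<open>V(H)\<close>, and by ampleness it is a sink of \<open>\<Gamma>\<close>.
Walking forward along \<open>C\<close>-edges from a vertex of \<open>H\<close>, which terminates since \<open>\<Gamma>\<close> is finite
and acyclic, therefore ends in a sink; walking backward ends in a source, and together the
two walks form the required path.\<close>

definition diamond :: "('a \<times> 'a) set \<Rightarrow> bool" where
  "diamond R \<longleftrightarrow>
     (\<forall>a b c. (a, b) \<in> R \<longrightarrow> (a, c) \<in> R \<longrightarrow> b \<noteq> c \<longrightarrow> (\<exists>d. (b, d) \<in> R \<and> (c, d) \<in> R))"

lemma diamond_relpow_to_terminal:
  assumes "diamond R" and "t \<notin> Domain R"
    and "(x, t) \<in> R ^^ Suc k" and "(x, y) \<in> R"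
  shows "(y, t) \<in> R ^^ k"
  using assms(3,4)
proof (induction k arbitrary: x y)
  case 0
  then have "(x, t) \<in> R" by simp
  with \<open>(x, y) \<in> R\<close> assms(1,2) show ?case
    unfolding diamond_def by (cases "y = t") auto
next
  case (Suc k)
  then obtain x' where "(x, x') \<in> R" and x't: "(x', t) \<in> R ^^ Suc k"
    by (meson relpow_Suc_D2)
  show ?case
  proof (cases "y = x'")
    case True
    with x't show ?thesis by simp
  next
    case False
    with \<open>(x, x') \<in> R\<close> \<open>(x, y) \<in> R\<close> assms(1) obtain d where "(x', d) \<in> R" "(y, d) \<in> R"
      unfolding diamond_def by blast
    with Suc.IH x't show ?thesis by (meson relpow_Suc_I2)
  qed
qed

lemma diamond_symcl_to_terminal:
  assumes "diamond R" and "t \<notin> Domain R" and "(u, t) \<in> (R \<union> R\<inverse>)\<^sup>*"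
  shows "(u, t) \<in> R\<^sup>*"
  using assms(3)
proof (induction rule: converse_rtrancl_induct)
  case base
  show ?case by simp
next
  case (step u v)
  show ?case
  proof (cases "(u, v) \<in> R")
    case True
    with step.IH show ?thesis by simp
  next
    case False
    with step.hyps(1) have "(v, u) \<in> R" by blast
    from step.IH obtain n where vt: "(v, t) \<in> R ^^ n" by (meson rtrancl_imp_relpow)
    with \<open>(v, u) \<in> R\<close> assms(2) obtain k where "n = Suc k" by (cases n) auto
    with vt \<open>(v, u) \<in> R\<close> assms(1,2) have "(u, t) \<in> R ^^ k"
      by (meson diamond_relpow_to_terminal)
    then show ?thesis by (meson relpow_imp_rtrancl)
  qed
qed

lemma diamond_unreached_has_successor:
  assumes "diamond R" and "R \<subseteq> E"
    and "(t, u) \<in> (R \<union> R\<inverse>)\<^sup>*" and "(u, t) \<notin> E\<^sup>*"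
  shows "t \<in> Domain R"
proof (rule ccontr)
  assume "t \<notin> Domain R"
  moreover have "(u, t) \<in> (R \<union> R\<inverse>)\<^sup>*"
    using assms(3) sym_rtrancl[OF sym_Un_converse] by (meson symD)
  ultimately have "(u, t) \<in> R\<^sup>*"
    by (rule diamond_symcl_to_terminal[OF assms(1)])
  with assms(2,4) show False using rtrancl_mono by blast
qed

lemma wf_reaches_terminal:
  assumes "wf (R\<inverse>)"
    and "\<And>t. (a, t) \<in> R\<^sup>* \<Longrightarrow> \<not> P t \<Longrightarrow> t \<in> Domain R"
  shows "\<exists>z. (a, z) \<in> R\<^sup>* \<and> P z"
proof -
  have "a \<in> {t. (a, t) \<in> R\<^sup>*}" by simp
  with assms(1) obtain z where az: "(a, z) \<in> R\<^sup>*"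
    and maximal: "\<And>y. (z, y) \<in> R \<Longrightarrow> (a, y) \<notin> R\<^sup>*"
    by (rule wfE_min) auto
  have "z \<notin> Domain R"
    using az maximal by (meson DomainE rtrancl.rtrancl_into_rtrancl)
  with az assms(2) show ?thesis by blast
qed

lemma is_sink_converse: "is_sink V (E\<inverse>) v \<longleftrightarrow> is_source V E v"
  unfolding is_sink_def is_source_def by force

lemma is_source_converse: "is_source V (E\<inverse>) v \<longleftrightarrow> is_sink V E v"
  unfolding is_sink_def is_source_def by force

lemma ample_vset_converse: "ample_vset V (E\<inverse>) W \<longleftrightarrow> ample_vset V E W"
  unfolding ample_vset_def is_sink_converse is_source_converse rtrancl_converse by auto

lemma diamond_component_reaches_sink:
  assumes "finite E" and "acyclic E" and "E \<subseteq> V \<times> V" and ample: "ample_vset V E W"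
    and "diamond R" and "R \<subseteq> E" and "h \<in> V"
    and component: "\<And>w. w \<in> W \<Longrightarrow> (h, w) \<in> (R \<union> R\<inverse>)\<^sup>*"
  shows "\<exists>z. is_sink V E z \<and> (h, z) \<in> R\<^sup>*"
proof -
  have "wf (R\<inverse>)"
    using wf_subset[OF finite_acyclic_wf_converse[OF assms(1,2)]] assms(6) by blast
  then have "\<exists>z. (h, z) \<in> R\<^sup>* \<and> is_sink V E z"
  proof (rule wf_reaches_terminal)
    fix t assume ht: "(h, t) \<in> R\<^sup>*" and "\<not> is_sink V E t"
    moreover from ht have "t \<in> V" using assms(3,6,7) by (induction rule: rtrancl_induct) auto
    ultimately obtain w where "w \<in> W" and "(w, t) \<notin> E\<^sup>*"
      using ample unfolding ample_vset_def by blast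
    have "(t, h) \<in> (R \<union> R\<inverse>)\<^sup>*"
      using ht rtrancl_mono[of R "R \<union> R\<inverse>"] sym_rtrancl[OF sym_Un_converse]
      by (meson Un_upper1 subsetD symD)
    with component \<open>w \<in> W\<close> have "(t, w) \<in> (R \<union> R\<inverse>)\<^sup>*" by (meson rtrancl_trans)
    from this \<open>(w, t) \<notin> E\<^sup>*\<close> show "t \<in> Domain R"
      by (rule diamond_unreached_has_successor[OF assms(5,6)])
  qed
  then show ?thesis by blast
qed

lemma diamond_component_reaches_source:
  assumes "finite E" and "acyclic E" and "E \<subseteq> V \<times> V" and "ample_vset V E W"
    and "diamond (R\<inverse>)" and "R \<subseteq> E" and "h \<in> V"
    and component: "\<And>w. w \<in> W \<Longrightarrow> (h, w) \<in> (R \<union> R\<inverse>)\<^sup>*"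
  shows "\<exists>s. is_source V E s \<and> (s, h) \<in> R\<^sup>*"
proof -
  have "\<exists>s. is_sink V (E\<inverse>) s \<and> (h, s) \<in> (R\<inverse>)\<^sup>*"
  proof (rule diamond_component_reaches_sink)
    show "(h, w) \<in> (R\<inverse> \<union> (R\<inverse>)\<inverse>)\<^sup>*" if "w \<in> W" for w
      using component[OF that] by (simp add: Un_commute)
  qed (use assms(1-7) in \<open>auto simp: ample_vset_converse\<close>)
  then show ?thesis by (auto simp: is_sink_converse rtrancl_converse)
qed

lemma connected_edges_symcl_rtrancl:
  assumes "connected_edges H" and "H \<subseteq> C" and "u \<in> verts_of H" and "v \<in> verts_of H"
  shows "(u, v) \<in> (C \<union> C\<inverse>)\<^sup>*"
proof -
  have "(u, v) \<in> (H \<union> H\<inverse>)\<^sup>*" using assms(1,3,4) unfolding connected_edges_def by blast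
  moreover have "H \<union> H\<inverse> \<subseteq> C \<union> C\<inverse>" using assms(2) by blast
  ultimately show ?thesis using rtrancl_mono by blast
qed

lemma complete_set_Inter:
  assumes "\<S> \<noteq> {}" and "\<And>S. S \<in> \<S> \<Longrightarrow> complete_set E S"
  shows "complete_set E (\<Inter>\<S>)"
  using assms unfolding complete_set_def by blast

lemma complete_set_self: "complete_set E E"
  unfolding complete_set_def by simp

lemma complete_set_completion:
  assumes "F \<subseteq> E"
  shows "complete_set E (completion E F)"
  unfolding completion_def
proof (rule complete_set_Inter)
  show "{E0. complete_set E E0 \<and> F \<subseteq> E0} \<noteq> {}"
    using complete_set_self assms by blast
qed simp

lemma subset_completion: "F \<subseteq> completion E F"
  unfolding completion_def by blast

lemma completion_subset: "F \<subseteq> E \<Longrightarrow> completion E F \<subseteq> E"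
  unfolding completion_def using complete_set_self by blast

lemma modular_D:
  assumes "modular E" and "(a, b) \<in> E" and "(a, c) \<in> E" and "b \<noteq> c"
  obtains d where "(b, d) \<in> E" and "(c, d) \<in> E"
proof -
  have "\<forall>e1\<in>E. \<forall>e2\<in>E. e1 \<noteq> e2 \<and> fst e1 = fst e2 \<longrightarrow>
      (\<exists>f1\<in>E. \<exists>f2\<in>E. snd f1 = snd f2 \<and> snd e1 = fst f1 \<and> snd e2 = fst f2)"
    using assms(1) unfolding modular_def by (elim conjE)
  from bspec[OF bspec[OF this assms(2)] assms(3)] assms(4) obtain f1 f2
    where "f1 \<in> E" "f2 \<in> E" "snd f1 = snd f2" "b = fst f1" "c = fst f2"
    by auto
  with that show thesis by (metis prod.collapse)
qed

lemma modular_U: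
  assumes "modular E" and "(b, a) \<in> E" and "(c, a) \<in> E" and "b \<noteq> c"
  obtains d where "(d, b) \<in> E" and "(d, c) \<in> E"
proof -
  have "\<forall>h1\<in>E. \<forall>h2\<in>E. h1 \<noteq> h2 \<and> snd h1 = snd h2 \<longrightarrow>
      (\<exists>g1\<in>E. \<exists>g2\<in>E. fst g1 = fst g2 \<and> snd g1 = fst h1 \<and> snd g2 = fst h2)"
    using assms(1) unfolding modular_def by (elim conjE)
  from bspec[OF bspec[OF this assms(2)] assms(3)] assms(4) obtain g1 g2
    where "g1 \<in> E" "g2 \<in> E" "fst g1 = fst g2" "snd g1 = b" "snd g2 = c"
    by auto
  with that show thesis by (metis prod.collapse)
qed

lemma complete_set_D:
  assumes "complete_set E S" and "(a, b) \<in> S" and "(a, c) \<in> S" and "b \<noteq> c"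
    and "(b, d) \<in> E" and "(c, d) \<in> E"
  shows "(b, d) \<in> S" and "(c, d) \<in> S"
proof -
  have "\<forall>e1\<in>S. \<forall>e2\<in>S. \<forall>f1\<in>E. \<forall>f2\<in>E.
      e1 \<noteq> e2 \<and> fst e1 = fst e2 \<and> snd f1 = snd f2 \<and> snd e1 = fst f1 \<and> snd e2 = fst f2
      \<longrightarrow> f1 \<in> S \<and> f2 \<in> S"
    using assms(1) unfolding complete_set_def by (elim conjE)
  from bspec[OF bspec[OF bspec[OF bspec[OF this assms(2)] assms(3)] assms(5)] assms(6)] assms(4)
  show "(b, d) \<in> S" and "(c, d) \<in> S" by auto
qed

lemma complete_set_U:
  assumes "complete_set E S" and "(b, a) \<in> S" and "(c, a) \<in> S" and "b \<noteq> c"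
    and "(d, b) \<in> E" and "(d, c) \<in> E"
  shows "(d, b) \<in> S" and "(d, c) \<in> S"
proof -
  have "\<forall>f1\<in>S. \<forall>f2\<in>S. \<forall>e1\<in>E. \<forall>e2\<in>E.
      f1 \<noteq> f2 \<and> snd f1 = snd f2 \<and> fst e1 = fst e2 \<and> snd e1 = fst f1 \<and> snd e2 = fst f2
      \<longrightarrow> e1 \<in> S \<and> e2 \<in> S"
    using assms(1) unfolding complete_set_def by (elim conjE)
  from bspec[OF bspec[OF bspec[OF bspec[OF this assms(2)] assms(3)] assms(5)] assms(6)] assms(4)
  show "(d, b) \<in> S" and "(d, c) \<in> S" by auto
qed

lemma diamond_completion:
  assumes "modular E" and "F \<subseteq> E"
  shows "diamond (completion E F)"
  unfolding diamond_def
proof (intro allI impI)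
  fix a b c
  assume "(a, b) \<in> completion E F" and "(a, c) \<in> completion E F" and "b \<noteq> c"
  moreover from this completion_subset[OF assms(2)] obtain d where "(b, d) \<in> E" "(c, d) \<in> E"
    using modular_D[OF assms(1)] by blast
  ultimately show "\<exists>d. (b, d) \<in> completion E F \<and> (c, d) \<in> completion E F"
    using complete_set_D[OF complete_set_completion[OF assms(2)]] by blast
qed

lemma diamond_converse_completion:
  assumes "modular E" and "F \<subseteq> E"
  shows "diamond ((completion E F)\<inverse>)"
  unfolding diamond_def converse_iff
proof (intro allI impI)
  fix a b c
  assume "(b, a) \<in> completion E F" and "(c, a) \<in> completion E F" and "b \<noteq> c"
  moreover from this completion_subset[OF assms(2)] obtain d where "(d, b) \<in> E" "(d, c) \<in> E"
    using modular_U[OF assms(1)] by blast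
  ultimately show "\<exists>d. (d, b) \<in> completion E F \<and> (d, c) \<in> completion E F"
    using complete_set_U[OF complete_set_completion[OF assms(2)]] by blast
qed

theorem theorem3p2p4:
  fixes V :: "'a set" and E H :: "('a \<times> 'a) set"
  assumes "finite V"
    and "dgraph V E"
    and "acyclic E"
    and "modular E"
    and "H \<subseteq> E"
    and "ample_edges V E H"
    and "connected_edges H"
  shows "sufficient V E H"
proof -
  define C where "C = completion E H"
  have EV: "E \<subseteq> V \<times> V" using assms(2) unfolding dgraph_def .
  have "finite E" using finite_subset[OF EV] assms(1) by blast
  have CE: "C \<subseteq> E" unfolding C_def using assms(5) by (rule completion_subset)
  have ample: "ample_vset V E (verts_of H)" using assms(6) unfolding ample_edges_def .
  from assms(7) obtain h h' where "(h, h') \<in> H" unfolding connected_edges_def by auto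
  then have h: "h \<in> verts_of H" and hV: "h \<in> V"
    using assms(5) EV unfolding verts_of_def by (force, blast)
  have component: "(h, w) \<in> (C \<union> C\<inverse>)\<^sup>*" if "w \<in> verts_of H" for w
    using assms(7) subset_completion h that unfolding C_def by (rule connected_edges_symcl_rtrancl)
  obtain z where "is_sink V E z" and "(h, z) \<in> C\<^sup>*"
    using diamond_component_reaches_sink[OF \<open>finite E\<close> assms(3) EV ample _ CE hV component]
      diamond_completion[OF assms(4,5)] unfolding C_def by blast
  moreover obtain s where "is_source V E s" and "(s, h) \<in> C\<^sup>*"
    using diamond_component_reaches_source[OF \<open>finite E\<close> assms(3) EV ample _ CE hV component]
      diamond_converse_completion[OF assms(4,5)] unfolding C_def by blast
  ultimately show ?thesis
    unfolding sufficient_def C_def[symmetric] by (meson rtrancl_trans)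
qed

end
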